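(* Let $n=\prod_{i=1}^{k}p_i^{t_i}$, where $p_1,\dots,p_k$ are distinct odd primes and $t_1,\dots,t_k\ge 0$ are integers. Then the lattice $\widetilde\Pi(D_n)$ is isomorphic to the direct product lattice $T(n)\times C_2$.
   Context: For a positive integer $n$, $D_n=\langle r,s\mid r^n=e,\ s^2=e,\ srs^{-1}=r^{-1}\rangle$ is the dihedral group of order $2n$. For a finite group $G$ and a subgroup $H\le G$, let $\pi_e(H)=\{o(x)\mid x\in H\}$. Let $\mathcal{L}(G)$ be the set of subgroups of $G$; define $H_1\equiv H_2$ iff $\pi_e(H_1)=\pi_e(H_2)$, with class $[H]$. The poset $\widetilde\Pi(G)$ is $\mathcal{L}(G)/\!\equiv$ ordered by $[H_1]\lesssim[H_2]$ iff $\pi_e(H_1)\subseteq\pi_e(H_2)$ (for $G=D_n$ this poset is a lattice). $T(n)$ denotes the lattice of positive divisors of $n$ ordered by divisibility, $C_2$ the two-element chain, and $T(n)\times C_2$ carries the componentwise order. *)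

theory Defs
  imports "HOL-Algebra.Multiplicative_Group"
begin

text \<open>Concrete model of the dihedral group D_n of order 2n: the pair (k, b) stands for
  r^k s^(if b then 1 else 0), with 0 <= k < n.  The multiplication follows from
  r^n = e, s^2 = e, s r s^-1 = r^-1:  r^a s^b r^c s^d = r^(a +/- c) s^(b+d).\<close>
definition dihedral :: "nat \<Rightarrow> (nat \<times> bool) monoid" where
  "dihedral n = \<lparr> carrier = {(k, b). k < n},
     mult = (\<lambda>(a, b) (c, d). ((a + (if b then n - c else c)) mod n, b \<noteq> d)),
     one = (0, False) \<rparr>"

definition pi_e :: "('a, 'b) monoid_scheme \<Rightarrow> 'a set \<Rightarrow> nat set" where
  "pi_e G H = group.ord G ` H"

definition pe_class :: "('a, 'b) monoid_scheme \<Rightarrow> 'a set \<Rightarrow> 'a set set" where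
  "pe_class G H = {K. subgroup K G \<and> pi_e G K = pi_e G H}"

definition pe_classes :: "('a, 'b) monoid_scheme \<Rightarrow> 'a set set set" where
  "pe_classes G = {pe_class G H | H. subgroup H G}"

definition pe_le :: "('a, 'b) monoid_scheme \<Rightarrow> 'a set set \<Rightarrow> 'a set set \<Rightarrow> bool" where
  "pe_le G X Y = (\<exists>H1 H2. subgroup H1 G \<and> subgroup H2 G \<and> X = pe_class G H1 \<and> Y = pe_class G H2
                       \<and> pi_e G H1 \<subseteq> pi_e G H2)"

definition TC2 :: "nat \<Rightarrow> (nat \<times> bool) set" where
  "TC2 n = {d. d dvd n} \<times> UNIV"

definition TC2_le :: "nat \<times> bool \<Rightarrow> nat \<times> bool \<Rightarrow> bool" where
  "TC2_le x y = (fst x dvd fst y \<and> (snd x \<longrightarrow> snd y))"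

end

theory Submission
  imports Defs "HOL-Computational_Algebra.Group_Closure"
begin

(* The rotations of a subgroup H of D_n are the powers of r^m for some m dividing n, a cyclic
   group of order d = n/m whose element orders are exactly the divisors of d; every reflection
   has order 2.  Hence pi_e(H) = {e. e dvd d} plus {2} iff H contains a reflection, and every
   pair (d, b) with d dividing n arises.  As n is odd, 2 is never a rotation order, so inclusion
   of these sets is divisibility of the d's together with implication of the b's: the classes
   [H] are ordered exactly like T(n) x C_2. *)

lemma (in group) ord_eq_2I:
  assumes "x \<in> carrier G" "x \<noteq> \<one>" "x \<otimes> x = \<one>"
  shows "ord x = 2"
proof -
  have "x [^] (2::nat) = \<one>"
    using assms by (simp add: numeral_2_eq_2)
  then have "ord x dvd 2"
    using assms(1) pow_eq_id by blast
  moreover have "ord x \<noteq> 1"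
    using assms ord_eq_1 by blast
  ultimately show ?thesis
    using dvd_imp_le[of "ord x" 2] by (cases "ord x") (auto simp: le_Suc_eq)
qed

lemma (in group) ord_pow_range:
  assumes "x \<in> carrier G" "ord x > 0"
  shows "ord ` range (\<lambda>j::nat. x [^] j) = {e. e dvd ord x}"
proof (intro equalityI subsetI)
  fix e assume "e \<in> ord ` range (\<lambda>j::nat. x [^] j)"
  moreover have "d div gcd d j dvd d" for d j :: nat
    by (metis dvd_mult_div_cancel dvd_triv_right gcd_dvd1)
  ultimately show "e \<in> {e. e dvd ord x}"
    using assms(1) by (auto simp: ord_pow_gen)
next
  fix e assume "e \<in> {e. e dvd ord x}"
  then obtain j where j: "ord x = e * j" by auto
  then have "j dvd ord x" "j > 0" "e > 0" using assms(2) by auto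
  then have "ord (x [^] j) = e"
    using assms(1) j by (simp add: ord_pow_gen gcd_nat.absorb2)
  then show "e \<in> ord ` range (\<lambda>j::nat. x [^] j)" by blast
qed

lemma (in group) subgroup_pow_exponents:
  assumes H: "subgroup H G" and x: "x \<in> carrier G"
  shows "\<exists>m. \<forall>k::nat. x [^] k \<in> H \<longleftrightarrow> m dvd k"
proof -
  define I where "I = {k::int. x [^] k \<in> H}"
  have "group_closure I \<subseteq> I"
  proof
    fix k assume "k \<in> group_closure I"
    then show "k \<in> I"
    proof induction
      case (base k)
      then show ?case using subgroup.one_closed[OF H] by (auto simp: I_def)
    next
      case (diff s t)
      then show ?case
        using x by (auto simp: I_def int_pow_diff intro: subgroup.m_closed[OF H] subgroup.m_inv_closed[OF H])
    qed
  qed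
  \<comment> \<open>The exponents form a subgroup of the integers, hence the multiples of their gcd.\<close>
  then have "I = range (times (Gcd I))"
    using group_closure_eq[of I] by (auto intro: group_closure.base)
  have "x [^] k \<in> H \<longleftrightarrow> nat (Gcd I) dvd k" for k :: nat
  proof -
    have "x [^] k \<in> H \<longleftrightarrow> int k \<in> I"
      by (simp add: I_def int_pow_int)
    also have "\<dots> \<longleftrightarrow> Gcd I dvd int k"
      by (subst \<open>I = range (times (Gcd I))\<close>) (auto simp: dvd_def)
    also have "\<dots> \<longleftrightarrow> nat (Gcd I) dvd k"
      by (metis Gcd_int_greater_eq_0 int_dvd_int_iff int_nat_eq)
    finally show ?thesis .
  qed
  then show ?thesis by blast
qed

lemma pe_classes_order_iso:
  fixes S :: "'p \<Rightarrow> nat set"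
  assumes image: "pi_e G ` {H. subgroup H G} = S ` P" and inj: "inj_on S P"
  shows "\<exists>f. bij_betw f (pe_classes G) P \<and>
           (\<forall>X\<in>pe_classes G. \<forall>Y\<in>pe_classes G. pe_le G X Y \<longleftrightarrow> S (f X) \<subseteq> S (f Y))"
proof -
  define cls where "cls p = {K. subgroup K G \<and> pi_e G K = S p}" for p
  have in_cls: "H \<in> cls p \<longleftrightarrow> subgroup H G \<and> pi_e G H = S p" for H p
    by (simp add: cls_def)
  have pe_class_eq: "pe_class G H = cls p" if "pi_e G H = S p" for H p
    using that by (simp add: pe_class_def cls_def)
  have self_in_pe_class: "H \<in> pe_class G H" if "subgroup H G" for H
    using that by (simp add: pe_class_def)
  have realize: "\<exists>H. subgroup H G \<and> pi_e G H = S p" if "p \<in> P" for p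
  proof -
    have "S p \<in> pi_e G ` {H. subgroup H G}"
      using image that by simp
    then show ?thesis by auto
  qed
  have cls_inj: "inj_on cls P"
  proof (rule inj_onI)
    fix p q assume "p \<in> P" "q \<in> P" "cls p = cls q"
    moreover obtain H where "H \<in> cls p"
      using realize[OF \<open>p \<in> P\<close>] in_cls by blast
    ultimately show "p = q"
      using inj by (metis in_cls inj_onD)
  qed
  moreover have cls_image: "cls ` P = pe_classes G"
  proof (intro equalityI subsetI)
    fix X assume "X \<in> cls ` P"
    then obtain p H where "p \<in> P" "X = cls p" "subgroup H G" "pi_e G H = S p"
      using realize by blast
    then show "X \<in> pe_classes G"
      unfolding pe_classes_def using pe_class_eq by blast
  next
    fix X assume "X \<in> pe_classes G"
    then obtain H where H: "subgroup H G" "X = pe_class G H"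
      unfolding pe_classes_def by blast
    then obtain p where "p \<in> P" "pi_e G H = S p"
      using image by blast
    then show "X \<in> cls ` P"
      using H pe_class_eq by blast
  qed
  ultimately have bij: "bij_betw cls P (pe_classes G)"
    by (simp add: bij_betw_def)
  have cls_le: "pe_le G (cls p) (cls q) \<longleftrightarrow> S p \<subseteq> S q" if "p \<in> P" "q \<in> P" for p q
  proof
    assume "pe_le G (cls p) (cls q)"
    then obtain H1 H2 where H: "subgroup H1 G" "subgroup H2 G" "cls p = pe_class G H1"
        "cls q = pe_class G H2" "pi_e G H1 \<subseteq> pi_e G H2"
      unfolding pe_le_def by blast
    then have "H1 \<in> cls p" "H2 \<in> cls q"
      using self_in_pe_class by simp_all
    then show "S p \<subseteq> S q"
      using H(5) by (simp add: in_cls)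
  next
    assume "S p \<subseteq> S q"
    moreover obtain H1 H2 where "subgroup H1 G" "pi_e G H1 = S p" "subgroup H2 G" "pi_e G H2 = S q"
      using realize[OF \<open>p \<in> P\<close>] realize[OF \<open>q \<in> P\<close>] by blast
    ultimately show "pe_le G (cls p) (cls q)"
      unfolding pe_le_def using pe_class_eq by metis
  qed
  show ?thesis
  proof (intro exI[of _ "the_inv_into P cls"] conjI ballI)
    show "bij_betw (the_inv_into P cls) (pe_classes G) P"
      using bij_betw_the_inv_into[OF bij] .
  next
    fix X Y assume "X \<in> pe_classes G" "Y \<in> pe_classes G"
    then have "X \<in> cls ` P" "Y \<in> cls ` P"
      by (simp_all add: cls_image)
    then obtain p q where "p \<in> P" "q \<in> P" "X = cls p" "Y = cls q"
      by blast
    then show "pe_le G X Y \<longleftrightarrow> S (the_inv_into P cls X) \<subseteq> S (the_inv_into P cls Y)"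
      using cls_le the_inv_into_f_f[OF cls_inj] by simp
  qed
qed

lemma dihedral_carrier: "carrier (dihedral n) = {(k, b). k < n}"
  by (simp add: dihedral_def)

lemma dihedral_one: "\<one>\<^bsub>dihedral n\<^esub> = (0, False)"
  by (simp add: dihedral_def)

lemma dihedral_mult:
  "(a, b) \<otimes>\<^bsub>dihedral n\<^esub> (c, d) = ((a + (if b then n - c else c)) mod n, b \<noteq> d)"
  by (simp add: dihedral_def)

lemma dihedral_mult_int:
  assumes "c \<le> n"
  shows "(a, b) \<otimes>\<^bsub>dihedral n\<^esub> (c, d) =
           (nat ((int a + (if b then - int c else int c)) mod int n), b \<noteq> d)"
proof -
  have "int (a + (n - c)) = (int a - int c) + int n"
    using assms by simp
  then have fst_int: "int ((a + (if b then n - c else c)) mod n) = (int a + (if b then - int c else int c)) mod int n"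
    by (cases b) (simp_all only: zmod_int mod_add_self2 if_True if_False of_nat_add diff_conv_add_uminus)
  then show ?thesis
    by (simp add: dihedral_mult flip: fst_int)
qed

lemma group_dihedral:
  assumes "n > 0"
  shows "group (dihedral n)"
proof (rule groupI)
  fix x y z
  assume "x \<in> carrier (dihedral n)" "y \<in> carrier (dihedral n)" "z \<in> carrier (dihedral n)"
  then obtain a b c d e f where xyz: "x = (a, b)" "y = (c, d)" "z = (e, f)" "a < n" "c < n" "e < n"
    by (auto simp: dihedral_carrier)
  have "nat (i mod int n) \<le> n" for i
    using assms by (simp add: nat_le_iff order.strict_implies_order)
  then show "x \<otimes>\<^bsub>dihedral n\<^esub> y \<otimes>\<^bsub>dihedral n\<^esub> z = x \<otimes>\<^bsub>dihedral n\<^esub> (y \<otimes>\<^bsub>dihedral n\<^esub> z)"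
    using xyz assms by (cases b; cases d) (simp_all add: dihedral_mult_int mod_simps algebra_simps)
next
  fix x assume "x \<in> carrier (dihedral n)"
  then obtain a b where x: "x = (a, b)" "a < n"
    by (auto simp: dihedral_carrier)
  show "\<exists>y\<in>carrier (dihedral n). y \<otimes>\<^bsub>dihedral n\<^esub> x = \<one>\<^bsub>dihedral n\<^esub>"
  proof (cases b)
    case True
    then show ?thesis
      using x by (intro bexI[of _ "(a, True)"]) (auto simp: dihedral_mult dihedral_one dihedral_carrier)
  next
    case False
    then show ?thesis
      using x assms by (intro bexI[of _ "((n - a) mod n, False)"])
        (auto simp: dihedral_mult dihedral_one dihedral_carrier mod_simps)
  qed
qed (use assms in \<open>auto simp: dihedral_mult dihedral_one dihedral_carrier\<close>)

definition dihedral_rot :: "nat \<Rightarrow> nat \<times> bool" where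
  "dihedral_rot n = (1 mod n, False)"

lemma dihedral_rot_pow:
  assumes "n > 0"
  shows "dihedral_rot n [^]\<^bsub>dihedral n\<^esub> (k::nat) = (k mod n, False)"
  by (induction k) (use assms in \<open>simp_all add: dihedral_rot_def dihedral_one dihedral_mult mod_simps\<close>)

lemma dihedral_rot_carrier: "n > 0 \<Longrightarrow> dihedral_rot n \<in> carrier (dihedral n)"
  by (simp add: dihedral_rot_def dihedral_carrier)

lemma ord_dihedral_rot:
  assumes "n > 0"
  shows "group.ord (dihedral n) (dihedral_rot n) = n"
proof -
  interpret group "dihedral n"
    using assms by (rule group_dihedral)
  show ?thesis
    using assms by (simp add: ord_unique dihedral_rot_carrier dihedral_rot_pow dihedral_one dvd_eq_mod_eq_0)
qed

lemma ord_dihedral_reflection: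
  assumes "a < n"
  shows "group.ord (dihedral n) (a, True) = 2"
proof -
  interpret group "dihedral n"
    using assms by (intro group_dihedral) simp
  show ?thesis
    using assms by (intro ord_eq_2I) (simp_all add: dihedral_carrier dihedral_one dihedral_mult)
qed

lemma dihedral_inv:
  assumes "a < n"
  shows "inv\<^bsub>dihedral n\<^esub> (a, c) = (if c then (a, True) else ((n - a) mod n, False))"
proof -
  interpret group "dihedral n"
    using assms by (intro group_dihedral) simp
  show ?thesis
    by (rule inv_equality) (use assms in \<open>auto simp: dihedral_mult dihedral_one dihedral_carrier mod_simps\<close>)
qed

definition dihedral_orders :: "nat \<Rightarrow> bool \<Rightarrow> nat set" where
  "dihedral_orders d b = {e. e dvd d} \<union> (if b then {2} else {})"

lemma pi_e_dihedral_subgroup: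
  assumes n: "n > 0" and H: "subgroup H (dihedral n)" and m: "m dvd n"
    and rot: "\<And>k. dihedral_rot n [^]\<^bsub>dihedral n\<^esub> k \<in> H \<longleftrightarrow> m dvd k"
  shows "pi_e (dihedral n) H = dihedral_orders (n div m) (\<exists>a. (a, True) \<in> H)"
proof -
  interpret group "dihedral n"
    using n by (rule group_dihedral)
  let ?D = "dihedral n" and ?r = "dihedral_rot n"
  have r: "?r \<in> carrier (dihedral n)"
    using n by (rule dihedral_rot_carrier)
  have H_carrier: "H \<subseteq> {(k, b). k < n}"
    using subgroup.subset[OF H] by (simp add: dihedral_carrier)
  have "m > 0" "n div m > 0"
    using m n by (auto intro: Nat.gr0I simp: dvd_div_eq_0_iff)
  have "{x \<in> H. \<not> snd x} = range (\<lambda>j::nat. (?r [^]\<^bsub>?D\<^esub> m) [^]\<^bsub>?D\<^esub> j)"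
  proof (intro equalityI subsetI)
    fix x assume x: "x \<in> {x \<in> H. \<not> snd x}"
    then obtain a where "x = (a, False)" "a < n"
      using H_carrier by auto
    then have "x = ?r [^]\<^bsub>?D\<^esub> a" "m dvd a"
      using x n rot[of a] by (simp_all add: dihedral_rot_pow)
    then show "x \<in> range (\<lambda>j::nat. (?r [^]\<^bsub>?D\<^esub> m) [^]\<^bsub>?D\<^esub> j)"
      using r by (auto simp: nat_pow_pow)
  next
    fix x assume "x \<in> range (\<lambda>j::nat. (?r [^]\<^bsub>?D\<^esub> m) [^]\<^bsub>?D\<^esub> j)"
    then obtain j where "x = ?r [^]\<^bsub>?D\<^esub> (m * j)"
      using r by (auto simp: nat_pow_pow)
    then show "x \<in> {x \<in> H. \<not> snd x}"
      using n rot by (simp add: dihedral_rot_pow)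
  qed
  moreover have "ord (?r [^]\<^bsub>?D\<^esub> m) = n div m"
    using r n m \<open>m > 0\<close> by (simp add: ord_pow_gen ord_dihedral_rot gcd_nat.absorb2)
  ultimately have rotations: "ord ` {x \<in> H. \<not> snd x} = {e. e dvd n div m}"
    using ord_pow_range[of "?r [^]\<^bsub>?D\<^esub> m"] r \<open>n div m > 0\<close> by simp
  have reflections: "ord ` {x \<in> H. snd x} = (if \<exists>a. (a, True) \<in> H then {2} else {})"
    using H_carrier by (force simp: ord_dihedral_reflection)
  have "pi_e ?D H = ord ` ({x \<in> H. \<not> snd x} \<union> {x \<in> H. snd x})"
    unfolding pi_e_def by (rule arg_cong[where f = "image ord"]) blast
  also have "\<dots> = {e. e dvd n div m} \<union> (if \<exists>a. (a, True) \<in> H then {2} else {})"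
    by (simp only: image_Un rotations reflections)
  finally show ?thesis
    by (simp add: dihedral_orders_def)
qed

lemma subgroup_dihedral_multiples:
  assumes n: "n > 0" and m: "m dvd n"
  shows "subgroup {(a, c). a < n \<and> m dvd a \<and> (c \<longrightarrow> b)} (dihedral n)" (is "subgroup ?H _")
proof -
  interpret group "dihedral n"
    using n by (rule group_dihedral)
  show ?thesis
  proof (rule subgroupI)
    show "?H \<noteq> {}"
      using n by blast
  next
    fix x assume "x \<in> ?H"
    then show "inv\<^bsub>dihedral n\<^esub> x \<in> ?H"
      using n m by (auto simp: dihedral_inv split: if_splits intro!: dvd_mod dvd_diff_nat)
  next
    fix x y assume "x \<in> ?H" "y \<in> ?H"
    then show "x \<otimes>\<^bsub>dihedral n\<^esub> y \<in> ?H"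
      using n m by (auto simp: dihedral_mult intro!: dvd_mod dvd_diff_nat dvd_add)
  qed (auto simp: dihedral_carrier)
qed

lemma pi_e_dihedral_subgroups:
  assumes n: "n > 0"
  shows "pi_e (dihedral n) ` {H. subgroup H (dihedral n)} = case_prod dihedral_orders ` TC2 n"
proof (intro equalityI subsetI)
  interpret group "dihedral n"
    using n by (rule group_dihedral)
  fix S assume "S \<in> pi_e (dihedral n) ` {H. subgroup H (dihedral n)}"
  then obtain H where H: "subgroup H (dihedral n)" "S = pi_e (dihedral n) H"
    by blast
  obtain m where m: "\<And>k::nat. dihedral_rot n [^]\<^bsub>dihedral n\<^esub> k \<in> H \<longleftrightarrow> m dvd k"
    using subgroup_pow_exponents[OF H(1) dihedral_rot_carrier[OF n]] by blast
  have "m dvd n"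
    using m[of n] subgroup.one_closed[OF H(1)] n by (simp add: dihedral_rot_pow dihedral_one)
  then have "S = dihedral_orders (n div m) (\<exists>a. (a, True) \<in> H)" "n div m dvd n"
    using pi_e_dihedral_subgroup[OF n H(1) _ m] H(2) by auto
  then show "S \<in> case_prod dihedral_orders ` TC2 n"
    by (force simp: TC2_def)
next
  fix S assume "S \<in> case_prod dihedral_orders ` TC2 n"
  then obtain d b where d: "d dvd n" and S: "S = dihedral_orders d b"
    by (auto simp: TC2_def)
  define H where "H = {(a, c). a < n \<and> n div d dvd a \<and> (c \<longrightarrow> b)}"
  have "n div d dvd n"
    using d by auto
  then have H_sub: "subgroup H (dihedral n)"
    unfolding H_def by (rule subgroup_dihedral_multiples[OF n])
  have "dihedral_rot n [^]\<^bsub>dihedral n\<^esub> k \<in> H \<longleftrightarrow> n div d dvd k" for k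
    using n \<open>n div d dvd n\<close> by (simp add: H_def dihedral_rot_pow dvd_mod_iff)
  then have "pi_e (dihedral n) H = dihedral_orders (n div (n div d)) (\<exists>a. (a, True) \<in> H)"
    using pi_e_dihedral_subgroup[OF n H_sub \<open>n div d dvd n\<close>] by blast
  also have "\<dots> = S"
  proof -
    have "n div (n div d) = d"
      using n d by auto
    moreover have "(\<exists>a. (a, True) \<in> H) \<longleftrightarrow> b"
      using n by (auto simp: H_def)
    ultimately show ?thesis
      using S by simp
  qed
  finally show "S \<in> pi_e (dihedral n) ` {H. subgroup H (dihedral n)}"
    using H_sub by blast
qed

lemma dihedral_orders_subset_iff:
  assumes "odd d1" "odd d2"
  shows "dihedral_orders d1 b1 \<subseteq> dihedral_orders d2 b2 \<longleftrightarrow> d1 dvd d2 \<and> (b1 \<longrightarrow> b2)"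
proof
  assume sub: "dihedral_orders d1 b1 \<subseteq> dihedral_orders d2 b2"
  have "d1 \<in> dihedral_orders d1 b1"
    by (simp add: dihedral_orders_def)
  then have "d1 \<in> dihedral_orders d2 b2"
    using sub by blast
  \<comment> \<open>oddness keeps the reflection order 2 apart from the rotation orders\<close>
  moreover have "d1 \<noteq> 2"
    using assms(1) by auto
  ultimately have "d1 dvd d2"
    by (auto simp: dihedral_orders_def split: if_splits)
  moreover have "b2" if "b1"
  proof -
    have "2 \<in> dihedral_orders d2 b2"
      using sub that by (auto simp: dihedral_orders_def)
    then show ?thesis
      using assms(2) by (auto simp: dihedral_orders_def split: if_splits)
  qed
  ultimately show "d1 dvd d2 \<and> (b1 \<longrightarrow> b2)"
    by blast
next
  assume "d1 dvd d2 \<and> (b1 \<longrightarrow> b2)"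
  then show "dihedral_orders d1 b1 \<subseteq> dihedral_orders d2 b2"
    by (auto simp: dihedral_orders_def intro: dvd_trans)
qed

lemma dihedral_orders_subset_iff_TC2_le:
  assumes "odd n" "p \<in> TC2 n" "q \<in> TC2 n"
  shows "case_prod dihedral_orders p \<subseteq> case_prod dihedral_orders q \<longleftrightarrow> TC2_le p q"
proof -
  have "odd (fst p)" "odd (fst q)"
    using assms by (auto simp: TC2_def dest: dvd_trans)
  then show ?thesis
    by (simp add: split_beta dihedral_orders_subset_iff TC2_le_def)
qed

lemma inj_on_dihedral_orders_TC2:
  assumes "odd n"
  shows "inj_on (case_prod dihedral_orders) (TC2 n)"
proof (rule inj_onI)
  fix p q assume "p \<in> TC2 n" "q \<in> TC2 n" "case_prod dihedral_orders p = case_prod dihedral_orders q"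
  then have "TC2_le p q" "TC2_le q p"
    using dihedral_orders_subset_iff_TC2_le[OF assms] by (metis order_refl)+
  then show "p = q"
    by (auto simp: TC2_le_def prod_eq_iff intro: dvd_antisym)
qed

theorem theorem2p6:
  fixes n :: nat
  assumes "odd n"
  shows "\<exists>f. bij_betw f (pe_classes (dihedral n)) (TC2 n) \<and>
           (\<forall>X\<in>pe_classes (dihedral n). \<forall>Y\<in>pe_classes (dihedral n).
              pe_le (dihedral n) X Y \<longleftrightarrow> TC2_le (f X) (f Y))"
proof -
  have "n > 0"
    using assms by (rule odd_pos)
  obtain f where f: "bij_betw f (pe_classes (dihedral n)) (TC2 n) \<and>
      (\<forall>X\<in>pe_classes (dihedral n). \<forall>Y\<in>pe_classes (dihedral n).
         pe_le (dihedral n) X Y \<longleftrightarrow> case_prod dihedral_orders (f X) \<subseteq> case_prod dihedral_orders (f Y))"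
    using pe_classes_order_iso[OF pi_e_dihedral_subgroups[OF \<open>n > 0\<close>] inj_on_dihedral_orders_TC2[OF assms]] ..
  show ?thesis
  proof (intro exI[of _ f] conjI ballI)
    show bij: "bij_betw f (pe_classes (dihedral n)) (TC2 n)"
      using f ..
    fix X Y assume "X \<in> pe_classes (dihedral n)" "Y \<in> pe_classes (dihedral n)"
    then show "pe_le (dihedral n) X Y \<longleftrightarrow> TC2_le (f X) (f Y)"
      using f dihedral_orders_subset_iff_TC2_le[OF assms] bij_betw_apply[OF bij] by simp
  qed
qed

end
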